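(* Let $A=\mathrm{Sym}(\mathrm{Sym}^2(\mathbb{C}^\infty))=\mathbb{C}[x_{i,j}]$ and let $\mathfrak{m}$ be the ideal generated by $x_{i,i}-1$ ($i\ge1$) and $x_{i,j}$ ($i\ne j$). If $I$ is a nonzero $\mathrm{GL}_\infty$-stable ideal of $A$, then $I+\mathfrak{m}=A$.
   Context: $x_{i,j}=e_ie_j$ for the basis $e_1,e_2,\dots$ of $\mathbb{C}^\infty$; $\mathrm{GL}_\infty=\bigcup_n\mathrm{GL}_n$ acts on $A$ via its action on $\mathbb{C}^\infty$. *)

theory Defs
  imports Complex_Main "HOL-Library.Poly_Mapping" "HOL-Library.Uprod"
begin

text \<open>Variables x_{i,j} = e_i e_j (i,j indexed by nat, basis e_0, e_1, ...),
  with x_{i,j} = x_{j,i}: indexed by unordered pairs.\<close>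
type_synonym var = "nat uprod"
type_synonym mono = "var \<Rightarrow>\<^sub>0 nat"
type_synonym poly = "mono \<Rightarrow>\<^sub>0 complex"

definition X :: "nat \<Rightarrow> nat \<Rightarrow> poly" where
  "X i j = Poly_Mapping.single (Poly_Mapping.single (Upair i j) 1) 1"

definition const :: "complex \<Rightarrow> poly" where
  "const c = Poly_Mapping.single 0 c"

definition mono_eval :: "(var \<Rightarrow> poly) \<Rightarrow> mono \<Rightarrow> poly" where
  "mono_eval \<sigma> m = (\<Prod>v\<in>Poly_Mapping.keys m. \<sigma> v ^ Poly_Mapping.lookup m v)"

definition subst :: "(var \<Rightarrow> poly) \<Rightarrow> poly \<Rightarrow> poly" where
  "subst \<sigma> p = (\<Sum>m\<in>Poly_Mapping.keys p. const (Poly_Mapping.lookup p m) * mono_eval \<sigma> m)"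

text \<open>GL_infinity: infinite matrices (g k l = k-th coordinate of g e_l) that are
  the identity outside some n x n block and invertible there.\<close>
definition delta :: "nat \<Rightarrow> nat \<Rightarrow> complex" where
  "delta k l = (if k = l then 1 else 0)"

definition gl_inf :: "(nat \<Rightarrow> nat \<Rightarrow> complex) \<Rightarrow> bool" where
  "gl_inf g \<longleftrightarrow> (\<exists>n h. (\<forall>k l. (n \<le> k \<or> n \<le> l) \<longrightarrow> g k l = delta k l \<and> h k l = delta k l)
      \<and> (\<forall>k<n. \<forall>l<n. (\<Sum>j<n. g k j * h j l) = delta k l)
      \<and> (\<forall>k<n. \<forall>l<n. (\<Sum>j<n. h k j * g j l) = delta k l))"

text \<open>g acting on Sym^2: e_i e_j \<mapsto> (g e_i)(g e_j) = sum_{k,l} g_{k,i} g_{l,j} x_{k,l}.\<close>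
definition act_var :: "(nat \<Rightarrow> nat \<Rightarrow> complex) \<Rightarrow> var \<Rightarrow> poly" where
  "act_var g v = (let i = Min (set_uprod v); j = Max (set_uprod v) in
     (\<Sum>k\<in>{k. g k i \<noteq> 0}. \<Sum>l\<in>{l. g l j \<noteq> 0}. const (g k i * g l j) * X k l))"

definition act :: "(nat \<Rightarrow> nat \<Rightarrow> complex) \<Rightarrow> poly \<Rightarrow> poly" where
  "act g p = subst (act_var g) p"

definition is_ideal :: "poly set \<Rightarrow> bool" where
  "is_ideal I \<longleftrightarrow> 0 \<in> I \<and> (\<forall>a\<in>I. \<forall>b\<in>I. a + b \<in> I) \<and> (\<forall>r. \<forall>a\<in>I. r * a \<in> I)"

definition ideal_gen :: "poly set \<Rightarrow> poly set" where
  "ideal_gen S = \<Inter>{I. is_ideal I \<and> S \<subseteq> I}"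

definition mm :: "poly set" where
  "mm = ideal_gen ({X i i - 1 | i. True} \<union> {X i j | i j. i \<noteq> j})"

definition GL_stable :: "poly set \<Rightarrow> bool" where
  "GL_stable I \<longleftrightarrow> (\<forall>g. gl_inf g \<longrightarrow> (\<forall>p\<in>I. act g p \<in> I))"

end

theory Submission
  imports Defs
begin

text \<open>Modulo \<open>\<mathfrak>m\<close> every polynomial is congruent to its value at the identity matrix, i.e. at
  the point \<open>x\<^sub>i\<^sub>j = \<delta>\<^sub>i\<^sub>j\<close>, and the value of \<open>g\<cdot>f\<close> there is \<open>f(g\<^sup>T g)\<close>. So it suffices to find
  \<open>g \<in> GL\<^sub>\<infinity>\<close> with \<open>f(g\<^sup>T g) \<noteq> 0\<close>: then \<open>g\<cdot>f \<in> I\<close> is a nonzero constant modulo \<open>\<mathfrak>m\<close>.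
  We choose a symmetric matrix \<open>a\<close> with \<open>f(a) \<noteq> 0\<close> one entry at a time, column by column,
  each diagonal entry avoiding the single value that would make the next Cholesky pivot vanish;
  the Cholesky factor \<open>g\<close> of \<open>a\<close> is then invertible with \<open>g\<^sup>T g = a\<close>.\<close>

abbreviation lookup where "lookup \<equiv> Poly_Mapping.lookup"
abbreviation keys where "keys \<equiv> Poly_Mapping.keys"
abbreviation single where "single \<equiv> Poly_Mapping.single"

lemma poly_mapping_sum_single: "p = (\<Sum>m\<in>keys p. single m (lookup p m))"
proof (rule poly_mapping_eqI)
  fix k
  show "lookup p k = lookup (\<Sum>m\<in>keys p. single m (lookup p m)) k"
    unfolding lookup_sum lookup_single
    by (cases "k \<in> keys p") (auto simp: when_def in_keys_iff sum.delta)
qed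

section \<open>Evaluation of polynomials\<close>

definition eval_mono :: "(var \<Rightarrow> complex) \<Rightarrow> mono \<Rightarrow> complex" where
  "eval_mono a m = (\<Prod>v\<in>keys m. a v ^ lookup m v)"

definition eval_poly :: "(var \<Rightarrow> complex) \<Rightarrow> poly \<Rightarrow> complex" where
  "eval_poly a p = (\<Sum>m\<in>keys p. lookup p m * eval_mono a m)"

definition vars :: "poly \<Rightarrow> var set" where
  "vars p = \<Union>(keys ` keys p)"

lemma finite_vars: "finite (vars p)"
  by (simp add: vars_def)

lemma eval_mono_superset:
  "finite S \<Longrightarrow> keys m \<subseteq> S \<Longrightarrow> eval_mono a m = (\<Prod>v\<in>S. a v ^ lookup m v)"
  unfolding eval_mono_def by (rule prod.mono_neutral_left) (auto simp: in_keys_iff)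

lemma eval_poly_superset:
  "finite S \<Longrightarrow> keys p \<subseteq> S \<Longrightarrow> eval_poly a p = (\<Sum>m\<in>S. lookup p m * eval_mono a m)"
  unfolding eval_poly_def by (rule sum.mono_neutral_left) (auto simp: in_keys_iff)

lemma eval_mono_zero [simp]: "eval_mono a 0 = 1"
  by (simp add: eval_mono_def)

lemma eval_mono_single: "eval_mono a (single v k) = a v ^ k"
  by (simp add: eval_mono_def)

lemma eval_mono_add: "eval_mono a (m1 + m2) = eval_mono a m1 * eval_mono a m2"
proof -
  let ?S = "keys m1 \<union> keys m2"
  have "eval_mono a (m1 + m2) = (\<Prod>v\<in>?S. a v ^ lookup (m1 + m2) v)"
    by (rule eval_mono_superset) (auto dest: subsetD[OF keys_add])
  also have "\<dots> = (\<Prod>v\<in>?S. a v ^ lookup m1 v) * (\<Prod>v\<in>?S. a v ^ lookup m2 v)"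
    by (simp add: lookup_add power_add prod.distrib)
  also have "\<dots> = eval_mono a m1 * eval_mono a m2"
    by (simp add: eval_mono_superset[of ?S])
  finally show ?thesis .
qed

lemma eval_poly_zero [simp]: "eval_poly a 0 = 0"
  by (simp add: eval_poly_def)

lemma eval_poly_single: "eval_poly a (single m c) = c * eval_mono a m"
  by (simp add: eval_poly_def)

lemma eval_poly_add: "eval_poly a (p + q) = eval_poly a p + eval_poly a q"
proof -
  let ?S = "keys p \<union> keys q"
  have "eval_poly a (p + q) = (\<Sum>m\<in>?S. lookup (p + q) m * eval_mono a m)"
    by (rule eval_poly_superset) (auto dest: subsetD[OF keys_add])
  also have "\<dots> = (\<Sum>m\<in>?S. lookup p m * eval_mono a m) + (\<Sum>m\<in>?S. lookup q m * eval_mono a m)"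
    by (simp add: lookup_add distrib_right sum.distrib)
  also have "\<dots> = eval_poly a p + eval_poly a q"
    by (simp add: eval_poly_superset[of ?S])
  finally show ?thesis .
qed

lemma eval_poly_sum: "eval_poly a (sum f A) = (\<Sum>x\<in>A. eval_poly a (f x))"
  by (induction A rule: infinite_finite_induct) (auto simp: eval_poly_add)

lemma eval_poly_mult: "eval_poly a (p * q) = eval_poly a p * eval_poly a q"
proof -
  have "p * q = (\<Sum>m\<in>keys p. single m (lookup p m)) * (\<Sum>m\<in>keys q. single m (lookup q m))"
    using poly_mapping_sum_single[of p] poly_mapping_sum_single[of q] by simp
  also have "\<dots> = (\<Sum>m\<in>keys p. \<Sum>m'\<in>keys q. single (m + m') (lookup p m * lookup q m'))"
    by (simp add: sum_product mult_single)
  finally have "eval_poly a (p * q) =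
      (\<Sum>m\<in>keys p. \<Sum>m'\<in>keys q. (lookup p m * lookup q m') * eval_mono a (m + m'))"
    by (simp add: eval_poly_sum eval_poly_single)
  also have "\<dots> = (\<Sum>m\<in>keys p. lookup p m * eval_mono a m) * (\<Sum>m'\<in>keys q. lookup q m' * eval_mono a m')"
    by (simp add: sum_product eval_mono_add mult_ac)
  finally show ?thesis by (simp add: eval_poly_def)
qed

lemma eval_poly_prod: "eval_poly a (prod f A) = (\<Prod>x\<in>A. eval_poly a (f x))"
  by (induction A rule: infinite_finite_induct)
    (auto simp: eval_poly_mult eval_poly_single simp flip: single_one)

lemma eval_poly_power: "eval_poly a (p ^ n) = eval_poly a p ^ n"
  using eval_poly_prod[of a "\<lambda>_. p" "{..<n}"] by simp

lemma eval_poly_const [simp]: "eval_poly a (const c) = c"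
  by (simp add: const_def eval_poly_single)

lemma eval_poly_X [simp]: "eval_poly a (X i j) = a (Upair i j)"
  by (simp add: X_def eval_poly_single eval_mono_single)

lemma eval_poly_subst: "eval_poly a (subst \<sigma> p) = eval_poly (\<lambda>v. eval_poly a (\<sigma> v)) p"
  unfolding subst_def
  by (simp add: eval_poly_sum eval_poly_mult mono_eval_def eval_poly_prod eval_poly_power
      eval_mono_def eval_poly_def[of _ p])

lemma eval_poly_cong: "(\<And>v. v \<in> vars p \<Longrightarrow> a v = b v) \<Longrightarrow> eval_poly a p = eval_poly b p"
  unfolding eval_poly_def eval_mono_def vars_def by (force intro!: sum.cong prod.cong)

lemma eval_poly_no_vars: "vars p = {} \<Longrightarrow> eval_poly a p = lookup p 0"
  by (rule trans[OF eval_poly_superset[of "{0}"]]) (auto simp: vars_def)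

lemma lookup_zero_if_no_vars: "vars p = {} \<Longrightarrow> p \<noteq> 0 \<Longrightarrow> lookup p 0 \<noteq> 0"
  by (metis all_not_in_conv empty_iff in_keys_iff keys_eq_empty vars_def UN_I)

section \<open>Reduction modulo the ideal of a point\<close>

definition var_poly :: "var \<Rightarrow> poly" where
  "var_poly v = single (single v 1) 1"

lemma X_eq_var_poly: "X i j = var_poly (Upair i j)"
  by (simp add: X_def var_poly_def)

lemma const_mult: "const a * const b = const (a * b)"
  by (simp add: const_def mult_single)

lemma const_add: "const a + const b = const (a + b)"
  by (simp add: const_def single_add)

lemma const_zero [simp]: "const 0 = 0"
  by (simp add: const_def)

lemma const_one [simp]: "const 1 = 1"
  by (simp add: const_def)

lemma mono_eval_var_poly: "mono_eval var_poly m = single m 1"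
proof -
  have pow: "var_poly v ^ k = single (single v k) 1" for v k
    by (induction k) (auto simp: var_poly_def mult_single single_add[symmetric])
  have "(\<Prod>v\<in>A. single (f v) (1::complex)) = single (\<Sum>v\<in>A. f v) 1" for A and f :: "var \<Rightarrow> mono"
    by (induction A rule: infinite_finite_induct) (auto simp: mult_single)
  then show ?thesis
    unfolding mono_eval_def pow by (simp flip: poly_mapping_sum_single)
qed

lemma subst_var_poly: "subst var_poly p = p"
  unfolding subst_def mono_eval_var_poly
  by (subst (3) poly_mapping_sum_single) (simp add: const_def mult_single)

lemma is_ideal_ideal_gen: "is_ideal (ideal_gen S)"
  unfolding ideal_gen_def is_ideal_def by auto

lemma ideal_gen_subset: "S \<subseteq> ideal_gen S"
  unfolding ideal_gen_def by auto

lemma is_ideal_mm: "is_ideal mm"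
  by (simp add: mm_def is_ideal_ideal_gen)

lemma ideal_mult: "is_ideal I \<Longrightarrow> a \<in> I \<Longrightarrow> r * a \<in> I"
  unfolding is_ideal_def by auto

lemma ideal_add: "is_ideal I \<Longrightarrow> a \<in> I \<Longrightarrow> b \<in> I \<Longrightarrow> a + b \<in> I"
  unfolding is_ideal_def by auto

text \<open>The polynomials congruent modulo \<open>K\<close> to their value at \<open>a\<close> form a subring containing the
  variables.\<close>

lemma diff_const_eval_in_ideal:
  assumes K: "is_ideal K" and var_cong: "\<And>v. var_poly v - const (a v) \<in> K"
  shows "p - const (eval_poly a p) \<in> K"
proof -
  define J where "J = {q. q - const (eval_poly a q) \<in> K}"
  have const: "const c \<in> J" for c
    using K by (simp add: J_def is_ideal_def)
  have add: "q + r \<in> J" if "q \<in> J" "r \<in> J" for q r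
  proof -
    have "q + r - const (eval_poly a (q + r)) =
        (q - const (eval_poly a q)) + (r - const (eval_poly a r))"
      by (simp add: eval_poly_add const_add[symmetric] algebra_simps)
    moreover have "(q - const (eval_poly a q)) + (r - const (eval_poly a r)) \<in> K"
      using that K by (simp add: J_def ideal_add)
    ultimately show ?thesis by (simp only: J_def mem_Collect_eq)
  qed
  have mult: "q * r \<in> J" if "q \<in> J" "r \<in> J" for q r
  proof -
    have "q * r - const (eval_poly a (q * r)) =
        q * (r - const (eval_poly a r)) + const (eval_poly a r) * (q - const (eval_poly a q))"
      by (simp add: eval_poly_mult const_mult[symmetric] algebra_simps)
    then show ?thesis using that K by (simp add: J_def ideal_add ideal_mult)
  qed
  have sum: "sum f A \<in> J" if "\<And>x. x \<in> A \<Longrightarrow> f x \<in> J" for f :: "mono \<Rightarrow> poly" and A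
    using that by (induction A rule: infinite_finite_induct) (auto simp: add const[of 0, simplified])
  have prod: "prod f A \<in> J" if "\<And>x. x \<in> A \<Longrightarrow> f x \<in> J" for f :: "var \<Rightarrow> poly" and A
    using that by (induction A rule: infinite_finite_induct) (auto simp: mult const[of 1, simplified])
  have power: "q ^ n \<in> J" if "q \<in> J" for q n
    using that by (induction n) (auto simp: mult const[of 1, simplified])
  have "subst var_poly p \<in> J"
    unfolding subst_def mono_eval_def using var_cong
    by (intro sum mult const prod power) (simp add: J_def var_poly_def eval_poly_single eval_mono_single)
  then show ?thesis
    by (simp add: subst_var_poly J_def)
qed

definition identity_point :: "var \<Rightarrow> complex" where
  "identity_point v = (if \<exists>i. v = Upair i i then 1 else 0)"

lemma identity_point_Upair [simp]: "identity_point (Upair i j) = delta i j"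
  by (auto simp: identity_point_def delta_def)

lemma diff_const_eval_identity_point_in_mm: "p - const (eval_poly identity_point p) \<in> mm"
proof (rule diff_const_eval_in_ideal[OF is_ideal_mm])
  fix v :: var
  obtain i j where v: "v = Upair i j" by (cases v)
  have "X i j - const (delta i j) \<in> mm"
    unfolding mm_def by (rule subsetD[OF ideal_gen_subset]) (auto simp: delta_def const_def)
  then show "var_poly v - const (identity_point v) \<in> mm"
    by (simp add: v X_eq_var_poly)
qed

lemma ideal_sum_eq_UNIV:
  assumes "is_ideal I" "is_ideal K" "f \<in> I" "f - const c \<in> K" "c \<noteq> 0"
  shows "{a + b | a b. a \<in> I \<and> b \<in> K} = UNIV"
proof -
  have "q \<in> {a + b | a b. a \<in> I \<and> b \<in> K}" for q
  proof -
    define r where "r = q * const (1 / c)"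
    have "q = r * f + (- r) * (f - const c)"
      using \<open>c \<noteq> 0\<close> by (simp add: r_def algebra_simps const_mult)
    moreover have "r * f \<in> I" "(- r) * (f - const c) \<in> K"
      using assms ideal_mult by blast+
    ultimately show ?thesis by blast
  qed
  then show ?thesis by blast
qed

section \<open>The action evaluated at the identity\<close>

lemma eval_identity_point_act_var:
  assumes "\<And>k. g k i \<noteq> 0 \<Longrightarrow> k < N" "\<And>k. g k j \<noteq> 0 \<Longrightarrow> k < N"
  shows "eval_poly identity_point (act_var g (Upair i j)) = (\<Sum>k<N. g k i * g k j)"
proof -
  have restrict: "(\<Sum>k\<in>{k. g k x \<noteq> 0}. g k x * f k) = (\<Sum>k<N. g k x * f k)"
    if "\<And>k. g k x \<noteq> 0 \<Longrightarrow> k < N" for x and f :: "nat \<Rightarrow> complex"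
    by (rule sum.mono_neutral_left) (use that in auto)
  have gen: "eval_poly identity_point
        (\<Sum>k\<in>{k. g k x \<noteq> 0}. \<Sum>l\<in>{l. g l y \<noteq> 0}. const (g k x * g l y) * X k l)
      = (\<Sum>k<N. g k x * g k y)"
    if x: "\<And>k. g k x \<noteq> 0 \<Longrightarrow> k < N" and y: "\<And>k. g k y \<noteq> 0 \<Longrightarrow> k < N" for x y
  proof -
    have "eval_poly identity_point
          (\<Sum>k\<in>{k. g k x \<noteq> 0}. \<Sum>l\<in>{l. g l y \<noteq> 0}. const (g k x * g l y) * X k l)
        = (\<Sum>k\<in>{k. g k x \<noteq> 0}. g k x * (\<Sum>l\<in>{l. g l y \<noteq> 0}. g l y * delta k l))"
      by (simp add: eval_poly_sum eval_poly_mult sum_distrib_left mult_ac)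
    also have "\<dots> = (\<Sum>k<N. g k x * (\<Sum>l<N. g l y * delta k l))"
      by (simp add: restrict[OF x] restrict[OF y])
    also have "\<dots> = (\<Sum>k<N. g k x * g k y)"
      by (simp add: delta_def if_distrib[of "(*) _"] sum.delta cong: if_cong)
    finally show ?thesis .
  qed
  show ?thesis
  proof (cases "i \<le> j")
    case True
    then show ?thesis using gen[OF assms] by (simp add: act_var_def min_def max_def)
  next
    case False
    then show ?thesis using gen[OF assms(2,1)] by (simp add: act_var_def min_def max_def mult.commute)
  qed
qed

lemma eval_identity_point_act:
  assumes "\<And>k l. N \<le> k \<or> N \<le> l \<Longrightarrow> g k l = delta k l"
    and "\<And>i j. Upair i j \<in> vars p \<Longrightarrow> i < N \<and> j < N \<and> a (Upair i j) = (\<Sum>k<N. g k i * g k j)"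
  shows "eval_poly identity_point (act g p) = eval_poly a p"
  unfolding act_def eval_poly_subst
proof (rule eval_poly_cong)
  fix v assume v: "v \<in> vars p"
  obtain i j where v_eq: "v = Upair i j" by (cases v)
  have col: "k < N" if "x < N" "g k x \<noteq> 0" for x k
    using that assms(1)[of k x] by (cases "N \<le> k") (auto simp: delta_def)
  show "eval_poly identity_point (act_var g v) = a v"
    using assms(2)[of i j] v unfolding v_eq by (auto intro: col eval_identity_point_act_var)
qed

section \<open>Points where a nonzero polynomial does not vanish\<close>

definition coeff_var :: "var \<Rightarrow> nat \<Rightarrow> poly \<Rightarrow> poly" where
  "coeff_var v k p = (\<Sum>m\<in>{m\<in>keys p. lookup m v = k}. single (m - single v k) (lookup p m))"

lemma diff_single_add_single: "lookup m v = k \<Longrightarrow> (m - single v k) + single v k = (m::mono)"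
  by (rule poly_mapping_eqI) (auto simp: lookup_add lookup_minus lookup_single when_def)

lemma eval_poly_eq_sum_coeff_var:
  assumes "\<And>m. m \<in> keys p \<Longrightarrow> lookup m v \<le> D"
  shows "eval_poly a p = (\<Sum>i\<le>D. eval_poly a (coeff_var v i p) * a v ^ i)"
proof -
  have "eval_poly a p = (\<Sum>i\<le>D. \<Sum>m\<in>{m\<in>keys p. lookup m v = i}. lookup p m * eval_mono a m)"
    unfolding eval_poly_def by (rule sum.group[symmetric]) (use assms in auto)
  also have "\<dots> = (\<Sum>i\<le>D. \<Sum>m\<in>{m\<in>keys p. lookup m v = i}.
      lookup p m * eval_mono a (m - single v i) * a v ^ i)"
  proof (intro sum.cong refl)
    fix i m assume "m \<in> {m\<in>keys p. lookup m v = i}"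
    then have "eval_mono a m = eval_mono a ((m - single v i) + single v i)"
      by (simp add: diff_single_add_single)
    then show "lookup p m * eval_mono a m = lookup p m * eval_mono a (m - single v i) * a v ^ i"
      by (simp add: eval_mono_add eval_mono_single)
  qed
  also have "\<dots> = (\<Sum>i\<le>D. eval_poly a (coeff_var v i p) * a v ^ i)"
    by (simp add: coeff_var_def eval_poly_sum eval_poly_single sum_distrib_right)
  finally show ?thesis .
qed

lemma vars_coeff_var: "vars (coeff_var v k p) \<subseteq> vars p - {v}"
proof
  fix w assume "w \<in> vars (coeff_var v k p)"
  then obtain m' where m': "m' \<in> keys (coeff_var v k p)" "w \<in> keys m'"
    unfolding vars_def by blast
  have "m' \<in> (\<Union>m\<in>{m\<in>keys p. lookup m v = k}. keys (single (m - single v k) (lookup p m)))"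
    using subsetD[OF keys_sum m'(1)[unfolded coeff_var_def]] .
  then obtain m where m: "m \<in> keys p" "lookup m v = k" "m' \<in> keys (single (m - single v k) (lookup p m))"
    by blast
  then have m'_eq: "m' = m - single v k" by (simp split: if_splits)
  have "lookup m' w \<noteq> 0" using m'(2) by (simp add: in_keys_iff)
  then have "w \<noteq> v" "lookup m w \<noteq> 0"
    using m(2) unfolding m'_eq lookup_minus lookup_single by (auto simp: when_def split: if_splits)
  then show "w \<in> vars p - {v}" using m(1) unfolding vars_def by (auto simp: in_keys_iff)
qed

lemma coeff_var_nonzero:
  assumes "p \<noteq> 0" shows "\<exists>k. coeff_var v k p \<noteq> 0"
proof -
  obtain m0 where m0: "m0 \<in> keys p" using assms by (metis all_not_in_conv keys_eq_empty)
  let ?k = "lookup m0 v"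
  have "lookup (coeff_var v ?k p) (m0 - single v ?k) =
      (\<Sum>m\<in>{m\<in>keys p. lookup m v = ?k}. (lookup p m when m = m0))"
    unfolding coeff_var_def lookup_sum lookup_single
  proof (intro sum.cong refl)
    fix m assume "m \<in> {m\<in>keys p. lookup m v = ?k}"
    then have "m - single v ?k = m0 - single v ?k \<longleftrightarrow> m = m0"
      using diff_single_add_single[of m v ?k] diff_single_add_single[of m0 v ?k]
      by (metis (mono_tags, lifting) mem_Collect_eq)
    then show "(lookup p m when m - single v ?k = m0 - single v ?k) = (lookup p m when m = m0)"
      by (simp only:)
  qed
  also have "\<dots> = lookup p m0" using m0 by (simp add: when_def)
  finally have "coeff_var v ?k p \<noteq> 0" using m0 by (auto simp: in_keys_iff)
  then show ?thesis by blast
qed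

lemma coeff_var_eq_0:
  assumes "\<And>m. m \<in> keys p \<Longrightarrow> lookup m v \<le> D" "D < k"
  shows "coeff_var v k p = 0"
proof -
  have "{m\<in>keys p. lookup m v = k} = {}" using assms by force
  then show ?thesis unfolding coeff_var_def by (simp only: sum.empty)
qed

text \<open>Along the line through \<open>a\<close> in direction \<open>v\<close>, \<open>p\<close> is a nonzero univariate polynomial, with
  finitely many roots.\<close>

lemma exists_update_eval_poly_nonzero:
  assumes "eval_poly a (coeff_var v k p) \<noteq> 0" "finite F"
  obtains t where "t \<notin> F" "eval_poly (a(v := t)) p \<noteq> 0"
proof -
  define D where "D = Max (insert 0 ((\<lambda>m. lookup m v) ` keys p))"
  have D: "\<And>m. m \<in> keys p \<Longrightarrow> lookup m v \<le> D" unfolding D_def by (auto intro: Max_ge)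
  define c where "c i = eval_poly a (coeff_var v i p)" for i
  have "k \<le> D" using coeff_var_eq_0[OF D] assms(1) by (metis eval_poly_zero not_le)
  then have "finite {z. (\<Sum>i\<le>D. c i * z ^ i) = 0}"
    using assms(1) by (intro polyfun_roots_finite[of c k]) (simp_all add: c_def)
  then obtain t where t: "t \<notin> {z. (\<Sum>i\<le>D. c i * z ^ i) = 0} \<union> F"
    using ex_new_if_finite[OF infinite_UNIV_char_0] assms(2) by (metis finite_Un)
  have "eval_poly (a(v := t)) (coeff_var v i p) = c i" for i
    unfolding c_def using vars_coeff_var[of v i p] by (intro eval_poly_cong) auto
  then have "eval_poly (a(v := t)) p = (\<Sum>i\<le>D. c i * t ^ i)"
    using eval_poly_eq_sum_coeff_var[OF D, where a = "a(v := t)"] by simp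
  then show ?thesis using t that by auto
qed

text \<open>Choosing the coordinates along the list \<open>vs\<close>, each one may be required to avoid a finite
  set of values that depends only on the coordinates chosen before it.\<close>

lemma exists_point_eval_poly_nonzero_avoiding:
  fixes excluded :: "var \<Rightarrow> (var \<Rightarrow> complex) \<Rightarrow> complex set"
  assumes "distinct vs" "vars p \<subseteq> set vs" "p \<noteq> 0"
    and "\<And>v a. finite (excluded v a)"
    and "\<And>us v ws a b. vs = us @ v # ws \<Longrightarrow> (\<And>w. w \<in> set us \<Longrightarrow> a w = b w) \<Longrightarrow>
      excluded v a = excluded v b"
  shows "\<exists>a. eval_poly a p \<noteq> 0 \<and> (\<forall>v\<in>set vs. a v \<notin> excluded v a)"
  using assms
proof (induction vs arbitrary: p rule: rev_induct)
  case Nil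
  then show ?case using eval_poly_no_vars lookup_zero_if_no_vars by auto
next
  case (snoc v vs)
  note finite_excl = snoc.prems(4) and local_excl = snoc.prems(5)
  have v: "v \<notin> set vs" using snoc.prems(1) by simp
  obtain k where k: "coeff_var v k p \<noteq> 0" using coeff_var_nonzero[OF snoc.prems(3)] by blast
  have "\<exists>a. eval_poly a (coeff_var v k p) \<noteq> 0 \<and> (\<forall>w\<in>set vs. a w \<notin> excluded w a)"
  proof (rule snoc.IH)
    show "vars (coeff_var v k p) \<subseteq> set vs"
      using vars_coeff_var[of v k p] snoc.prems(2) by auto
    fix us w ws and a b :: "var \<Rightarrow> complex"
    assume "vs = us @ w # ws" "\<And>x. x \<in> set us \<Longrightarrow> a x = b x"
    then show "excluded w a = excluded w b"
      by (intro local_excl[of us w "ws @ [v]"]) auto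
  qed (use snoc.prems(1) k finite_excl in auto)
  then obtain a0 where a0: "eval_poly a0 (coeff_var v k p) \<noteq> 0" "\<forall>w\<in>set vs. a0 w \<notin> excluded w a0"
    by blast
  obtain t where t: "t \<notin> excluded v a0" "eval_poly (a0(v := t)) p \<noteq> 0"
    using exists_update_eval_poly_nonzero[OF a0(1) finite_excl] by blast
  have "(a0(v := t)) w \<notin> excluded w (a0(v := t))" if w: "w \<in> set (vs @ [v])" for w
  proof (cases "w = v")
    case True
    have "excluded v (a0(v := t)) = excluded v a0"
      by (rule local_excl[of vs v "[]"]) (use v in auto)
    then show ?thesis using True t(1) by simp
  next
    case False
    then obtain us ws where us: "vs = us @ w # ws" using w by (auto dest: split_list)
    have "excluded w (a0(v := t)) = excluded w a0"
      by (rule local_excl[of us w "ws @ [v]"]) (use us v in auto)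
    then show ?thesis using False a0(2) us by simp
  qed
  then show ?case using t(2) by blast
qed

section \<open>Cholesky factorization\<close>

type_synonym mat = "nat \<Rightarrow> nat \<Rightarrow> complex"

lemma sum_mult_sum_swap:
  fixes x :: "'a \<Rightarrow> 'c::comm_semiring_0"
  shows "(\<Sum>j\<in>A. x j * (\<Sum>m\<in>B. y j m * z m)) = (\<Sum>m\<in>B. (\<Sum>j\<in>A. x j * y j m) * z m)"
  by (simp add: sum_distrib_left sum_distrib_right mult_ac sum.swap[of _ A])

definition gram_factor :: "nat \<Rightarrow> (var \<Rightarrow> complex) \<Rightarrow> mat \<Rightarrow> mat \<Rightarrow> bool" where
  "gram_factor n a g h \<longleftrightarrow> (\<forall>k l. (n \<le> k \<or> n \<le> l) \<longrightarrow> g k l = delta k l \<and> h k l = delta k l)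
     \<and> (\<forall>k<n. \<forall>l<n. (\<Sum>j<n. g k j * h j l) = delta k l)
     \<and> (\<forall>k<n. \<forall>l<n. (\<Sum>j<n. h k j * g j l) = delta k l)
     \<and> (\<forall>i<n. \<forall>j<n. (\<Sum>k<n. g k i * g k j) = a (Upair i j))"

lemma gram_factorD:
  assumes "gram_factor n a g h"
  shows "n \<le> k \<or> n \<le> l \<Longrightarrow> g k l = delta k l"
    and "n \<le> k \<or> n \<le> l \<Longrightarrow> h k l = delta k l"
    and "k < n \<Longrightarrow> l < n \<Longrightarrow> (\<Sum>j<n. g k j * h j l) = delta k l"
    and "k < n \<Longrightarrow> l < n \<Longrightarrow> (\<Sum>j<n. h k j * g j l) = delta k l"
    and "k < n \<Longrightarrow> l < n \<Longrightarrow> (\<Sum>j<n. g j k * g j l) = a (Upair k l)"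
  using assms unfolding gram_factor_def by blast+

lemma gl_inf_if_gram_factor: "gram_factor n a g h \<Longrightarrow> gl_inf g"
  unfolding gl_inf_def gram_factor_def by blast

text \<open>One step of the Cholesky algorithm: from a factorization \<open>g\<^sup>T g = a\<close> of the leading \<open>n \<times> n\<close>
  block, with inverse \<open>h\<close>, the new column of \<open>g\<close> is \<open>c = h\<^sup>T a\<^sub>\<bullet>\<^sub>n\<close> above the pivot
  \<open>d = \<surd>(a\<^sub>n\<^sub>n - c\<^sup>T c)\<close>.\<close>

definition chol_col :: "nat \<Rightarrow> (var \<Rightarrow> complex) \<Rightarrow> mat \<Rightarrow> nat \<Rightarrow> complex" where
  "chol_col n a h m = (\<Sum>k<n. h k m * a (Upair k n))"

definition chol_pivot :: "nat \<Rightarrow> (var \<Rightarrow> complex) \<Rightarrow> mat \<Rightarrow> complex" where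
  "chol_pivot n a h = csqrt (a (Upair n n) - (\<Sum>m<n. (chol_col n a h m)\<^sup>2))"

definition chol_extend :: "nat \<Rightarrow> (var \<Rightarrow> complex) \<Rightarrow> mat \<Rightarrow> mat \<Rightarrow> mat" where
  "chol_extend n a g h = (\<lambda>k l.
     if l = n \<and> k < n then chol_col n a h k else if k = n \<and> l = n then chol_pivot n a h else g k l)"

definition chol_extend_inv :: "nat \<Rightarrow> (var \<Rightarrow> complex) \<Rightarrow> mat \<Rightarrow> mat" where
  "chol_extend_inv n a h = (\<lambda>k l.
     if l = n \<and> k < n then - (\<Sum>m<n. h k m * chol_col n a h m) / chol_pivot n a h
     else if k = n \<and> l = n then 1 / chol_pivot n a h else h k l)"

lemma chol_extend_entries:
  assumes F: "gram_factor n a g h"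
  shows "k < n \<Longrightarrow> l < n \<Longrightarrow> chol_extend n a g h k l = g k l"
    and "k < n \<Longrightarrow> l < n \<Longrightarrow> chol_extend_inv n a h k l = h k l"
    and "l < n \<Longrightarrow> chol_extend n a g h n l = 0"
    and "l < n \<Longrightarrow> chol_extend_inv n a h n l = 0"
    and "k < n \<Longrightarrow> chol_extend n a g h k n = chol_col n a h k"
    and "k < n \<Longrightarrow> chol_extend_inv n a h k n = - (\<Sum>m<n. h k m * chol_col n a h m) / chol_pivot n a h"
    and "chol_extend n a g h n n = chol_pivot n a h"
    and "chol_extend_inv n a h n n = 1 / chol_pivot n a h"
  using gram_factorD(1,2)[OF F, of n l]
  by (auto simp: chol_extend_def chol_extend_inv_def delta_def)

lemma chol_extend_right_inverse:
  assumes F: "gram_factor n a g h" and d: "chol_pivot n a h \<noteq> 0"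
    and kl: "k < Suc n" "l < Suc n"
  shows "(\<Sum>j<Suc n. chol_extend n a g h k j * chol_extend_inv n a h j l) = delta k l"
proof -
  let ?c = "chol_col n a h" and ?d = "chol_pivot n a h"
  consider "k < n" "l < n" | "k < n" "l = n" | "k = n" "l < n" | "k = n" "l = n"
    using kl by (auto simp: less_Suc_eq)
  then show ?thesis
  proof cases
    case 1
    then show ?thesis by (simp add: chol_extend_entries[OF F] gram_factorD(3)[OF F])
  next
    case 2
    have "(\<Sum>j<n. g k j * (\<Sum>m<n. h j m * ?c m)) = (\<Sum>m<n. delta k m * ?c m)"
      by (simp add: sum_mult_sum_swap gram_factorD(3)[OF F] \<open>k < n\<close>)
    also have "\<dots> = ?c k"
      using \<open>k < n\<close> by (simp add: delta_def if_distrib[of "\<lambda>x. x * _"] sum.delta cong: if_cong)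
    finally have "(\<Sum>j<n. g k j * (- (\<Sum>m<n. h j m * ?c m) / ?d)) = - ?c k / ?d"
      by (simp add: sum_divide_distrib[symmetric] sum_negf)
    then show ?thesis
      using 2 d by (simp add: chol_extend_entries[OF F] delta_def)
  next
    case 3
    then show ?thesis by (simp add: chol_extend_entries[OF F] delta_def)
  next
    case 4
    then show ?thesis using d by (simp add: chol_extend_entries[OF F] delta_def)
  qed
qed

lemma chol_extend_left_inverse:
  assumes F: "gram_factor n a g h" and d: "chol_pivot n a h \<noteq> 0"
    and kl: "k < Suc n" "l < Suc n"
  shows "(\<Sum>j<Suc n. chol_extend_inv n a h k j * chol_extend n a g h j l) = delta k l"
proof -
  consider "k < n" "l < n" | "k < n" "l = n" | "k = n" "l < n" | "k = n" "l = n"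
    using kl by (auto simp: less_Suc_eq)
  then show ?thesis
  proof cases
    case 1
    then show ?thesis by (simp add: chol_extend_entries[OF F] gram_factorD(4)[OF F])
  qed (use d in \<open>simp_all add: chol_extend_entries[OF F] delta_def\<close>)
qed

lemma chol_extend_gram:
  assumes F: "gram_factor n a g h" and ij: "i < Suc n" "j < Suc n"
  shows "(\<Sum>k<Suc n. chol_extend n a g h k i * chol_extend n a g h k j) = a (Upair i j)"
proof -
  let ?c = "chol_col n a h" and ?d = "chol_pivot n a h"
  have col: "(\<Sum>k<n. g k i * ?c k) = a (Upair i n)" if "i < n" for i
  proof -
    have "(\<Sum>k<n. g k i * ?c k) = (\<Sum>m<n. (\<Sum>k<n. g k i * h m k) * a (Upair m n))"
      unfolding chol_col_def by (rule sum_mult_sum_swap)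
    also have "\<dots> = (\<Sum>m<n. delta m i * a (Upair m n))"
      using gram_factorD(4)[OF F] that by (simp add: mult.commute)
    also have "\<dots> = a (Upair i n)"
      using that by (simp add: delta_def if_distrib[of "\<lambda>x. x * _"] sum.delta cong: if_cong)
    finally show ?thesis .
  qed
  have pivot_sq: "?d\<^sup>2 = a (Upair n n) - (\<Sum>m<n. (?c m)\<^sup>2)"
    by (simp add: chol_pivot_def)
  consider "i < n" "j < n" | "i < n" "j = n" | "i = n" "j < n" | "i = n" "j = n"
    using ij by (auto simp: less_Suc_eq)
  then show ?thesis
  proof cases
    case 1
    then show ?thesis by (simp add: chol_extend_entries[OF F] gram_factorD(5)[OF F])
  next
    case 2
    then show ?thesis by (simp add: chol_extend_entries[OF F] col)
  next
    case 3
    have "a (Upair n j) = a (Upair j n)" by (metis Upair_inject)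
    with 3 show ?thesis by (simp add: chol_extend_entries[OF F] col mult.commute)
  next
    case 4
    then show ?thesis using pivot_sq by (simp add: chol_extend_entries[OF F] power2_eq_square)
  qed
qed

lemma gram_factor_chol_extend:
  assumes F: "gram_factor n a g h" and d: "chol_pivot n a h \<noteq> 0"
  shows "gram_factor (Suc n) a (chol_extend n a g h) (chol_extend_inv n a h)"
  unfolding gram_factor_def
  using gram_factorD(1,2)[OF F] chol_extend_right_inverse[OF F d] chol_extend_left_inverse[OF F d]
    chol_extend_gram[OF F]
  by (auto simp: chol_extend_def chol_extend_inv_def)

fun chol :: "nat \<Rightarrow> (var \<Rightarrow> complex) \<Rightarrow> mat \<times> mat" where
  "chol 0 a = (delta, delta)"
| "chol (Suc n) a = (chol_extend n a (fst (chol n a)) (snd (chol n a)), chol_extend_inv n a (snd (chol n a)))"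

text \<open>The value of \<open>a\<^sub>n\<^sub>n\<close> for which the \<open>n\<close>-th pivot vanishes.\<close>

definition chol_excluded :: "nat \<Rightarrow> (var \<Rightarrow> complex) \<Rightarrow> complex" where
  "chol_excluded n a = (\<Sum>m<n. (chol_col n a (snd (chol n a)) m)\<^sup>2)"

lemma gram_factor_chol:
  assumes "\<And>j. j < n \<Longrightarrow> a (Upair j j) \<noteq> chol_excluded j a"
  shows "gram_factor n a (fst (chol n a)) (snd (chol n a))"
  using assms
proof (induction n)
  case 0
  then show ?case by (simp add: gram_factor_def delta_def)
next
  case (Suc n)
  have "chol_pivot n a (snd (chol n a)) \<noteq> 0"
    using Suc.prems[of n] by (simp add: chol_pivot_def chol_excluded_def)
  then show ?case using Suc by (simp add: gram_factor_chol_extend)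
qed

lemma chol_cong:
  "(\<And>i j. i < n \<Longrightarrow> j < n \<Longrightarrow> a (Upair i j) = b (Upair i j)) \<Longrightarrow> chol n a = chol n b"
proof (induction n)
  case 0
  then show ?case by simp
next
  case (Suc n)
  have col: "chol_col n a = chol_col n b"
    unfolding chol_col_def using Suc.prems by (intro ext sum.cong) auto
  have pivot: "chol_pivot n a = chol_pivot n b"
    unfolding chol_pivot_def using Suc.prems[of n n] col by (simp add: fun_eq_iff)
  have IH: "chol n a = chol n b" using Suc by simp
  show ?case
    unfolding chol.simps IH chol_extend_def chol_extend_inv_def col pivot ..
qed

lemma chol_excluded_cong:
  assumes "\<And>i j. i < n \<Longrightarrow> j < n \<Longrightarrow> a (Upair i j) = b (Upair i j)"
    and "\<And>k. k < n \<Longrightarrow> a (Upair k n) = b (Upair k n)"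
  shows "chol_excluded n a = chol_excluded n b"
  using chol_cong[of n a b] assms unfolding chol_excluded_def chol_col_def by simp

section \<open>Choosing the matrix entries column by column\<close>

fun upairs_below :: "nat \<Rightarrow> var list" where
  "upairs_below 0 = []"
| "upairs_below (Suc n) = upairs_below n @ map (\<lambda>k. Upair k n) [0..<Suc n]"

lemma Upair_in_upairs_below: "Upair i j \<in> set (upairs_below n) \<longleftrightarrow> i < n \<and> j < n"
proof (induction n)
  case (Suc n)
  have "Upair i j \<in> Upair n ` {..n} \<longleftrightarrow> (i = n \<and> j \<le> n) \<or> (j = n \<and> i \<le> n)"
    by (auto simp: image_iff)
  with Suc show ?case by (auto simp: lessThan_Suc_atMost[symmetric] less_Suc_eq)
qed simp

lemma distinct_upairs_below: "distinct (upairs_below n)"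
proof (induction n)
  case (Suc n)
  have "inj_on (\<lambda>k. Upair k n) {0..<Suc n}" by (auto simp: inj_on_def)
  moreover have "set (upairs_below n) \<inter> set (map (\<lambda>k. Upair k n) [0..<Suc n]) = {}"
    using Upair_in_upairs_below by auto
  moreover have "inj_on (\<lambda>k. Upair k n) {0..<n}" by (auto simp: inj_on_def)
  moreover have "Upair n n \<notin> (\<lambda>k. Upair k n) ` {0..<n}" by auto
  ultimately show ?case using Suc by (simp add: distinct_map)
qed simp

lemma vars_subset_upairs_below: "\<exists>N. vars p \<subseteq> set (upairs_below N)"
proof -
  define S where "S = \<Union>(set_uprod ` vars p)"
  have "finite S" unfolding S_def using finite_vars by simp
  define N where "N = Suc (Max S)"
  have bound: "i < N" if "v \<in> vars p" "i \<in> set_uprod v" for v i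
  proof -
    have "i \<in> S" using that unfolding S_def by blast
    then show ?thesis unfolding N_def using \<open>finite S\<close> by (simp add: le_imp_less_Suc)
  qed
  have "v \<in> set (upairs_below N)" if "v \<in> vars p" for v
    using bound[OF that] by (cases v) (simp add: Upair_in_upairs_below)
  then show ?thesis by blast
qed

lemma upairs_below_before_diagonal:
  assumes "upairs_below n = us @ Upair j j # ws"
  shows "(\<forall>i l. i < j \<and> l < j \<longrightarrow> Upair i l \<in> set us) \<and> (\<forall>k<j. Upair k j \<in> set us)"
  using assms
proof (induction n arbitrary: us ws)
  case (Suc n)
  let ?C = "map (\<lambda>k. Upair k n) [0..<Suc n]"
  from Suc.prems consider us' where "upairs_below n = us @ us'" "us' @ ?C = Upair j j # ws"
    | us' where "upairs_below n @ us' = us" "?C = us' @ Upair j j # ws"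
    by (auto simp: append_eq_append_conv2)
  then show ?case
  proof cases
    case 1
    show ?thesis
    proof (cases us')
      case Nil
      with 1 have "Upair 0 n = Upair j j" by (simp add: upt_rec)
      then show ?thesis by auto
    next
      case (Cons x r)
      with 1 have "upairs_below n = us @ Upair j j # r" by simp
      then show ?thesis using Suc by blast
    qed
  next
    case 2
    then have "Upair j j \<in> set ?C" by simp
    then have jn: "j = n" by auto
    have "map (\<lambda>k. Upair k n) [0..<n] @ [Upair n n] = us' @ Upair n n # ws"
      using 2 jn by simp
    moreover have "Upair n n \<notin> set (map (\<lambda>k. Upair k n) [0..<n])" by auto
    ultimately have "us' = map (\<lambda>k. Upair k n) [0..<n]"
      by (cases ws rule: rev_exhaust) auto
    then show ?thesis using 2 jn Upair_in_upairs_below by auto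
  qed
qed simp

definition excluded_diag :: "var \<Rightarrow> (var \<Rightarrow> complex) \<Rightarrow> complex set" where
  "excluded_diag v a = (\<lambda>j. chol_excluded j a) ` {j. v = Upair j j}"

lemma finite_excluded_diag: "finite (excluded_diag v a)"
proof -
  obtain x y where "v = Upair x y" by (cases v)
  then have "{j. v = Upair j j} \<subseteq> {x}" by auto
  then show ?thesis unfolding excluded_diag_def by (meson finite.emptyI finite_imageI finite_insert finite_subset)
qed

lemma excluded_diag_cong:
  assumes "upairs_below n = us @ v # ws" "\<And>w. w \<in> set us \<Longrightarrow> a w = b w"
  shows "excluded_diag v a = excluded_diag v b"
proof -
  have "chol_excluded j a = chol_excluded j b" if "v = Upair j j" for j
    using upairs_below_before_diagonal[of n us j ws] assms that
    by (intro chol_excluded_cong) auto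
  then show ?thesis unfolding excluded_diag_def by (intro image_cong) auto
qed

lemma exists_gl_inf_eval_act_nonzero:
  assumes "p \<noteq> 0"
  shows "\<exists>g. gl_inf g \<and> eval_poly identity_point (act g p) \<noteq> 0"
proof -
  obtain N where N: "vars p \<subseteq> set (upairs_below N)"
    using vars_subset_upairs_below by blast
  have "\<exists>a. eval_poly a p \<noteq> 0 \<and> (\<forall>v\<in>set (upairs_below N). a v \<notin> excluded_diag v a)"
    by (rule exists_point_eval_poly_nonzero_avoiding[OF distinct_upairs_below N assms
          finite_excluded_diag]) (rule excluded_diag_cong)
  then obtain a where a: "eval_poly a p \<noteq> 0" "\<forall>v\<in>set (upairs_below N). a v \<notin> excluded_diag v a"
    by blast
  have "a (Upair j j) \<noteq> chol_excluded j a" if "j < N" for j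
    using a(2) that by (auto simp: Upair_in_upairs_below excluded_diag_def)
  then have F: "gram_factor N a (fst (chol N a)) (snd (chol N a))"
    by (rule gram_factor_chol)
  have "eval_poly identity_point (act (fst (chol N a)) p) = eval_poly a p"
    using N gram_factorD(1,5)[OF F] by (intro eval_identity_point_act) (auto simp: Upair_in_upairs_below)
  then show ?thesis using a(1) gl_inf_if_gram_factor[OF F] by metis
qed

theorem mainTheorem14:
  fixes I :: "poly set"
  assumes "is_ideal I" and "I \<noteq> {0}" and "GL_stable I"
  shows "{a + b | a b. a \<in> I \<and> b \<in> mm} = UNIV"
proof -
  obtain f where f: "f \<in> I" "f \<noteq> 0"
    using assms(1,2) unfolding is_ideal_def by blast
  obtain g where g: "gl_inf g" "eval_poly identity_point (act g f) \<noteq> 0"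
    using exists_gl_inf_eval_act_nonzero[OF f(2)] by blast
  have "act g f \<in> I"
    using assms(3) g(1) f(1) unfolding GL_stable_def by blast
  then show ?thesis
    by (rule ideal_sum_eq_UNIV[OF assms(1) is_ideal_mm _ diff_const_eval_identity_point_in_mm g(2)])
qed

end
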